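(* Let $n\ge 3$ and let $\mu$ be a symmetric measure on $L_n$. If $C^0_\mu<3$, then $$C_\mu=\max\{M_1(\mu),M_2(\mu),C^0_\mu\}.$$
   Context: $L_n$ is the path graph with vertices $\{1,\dots,n\}$ and edges $\{j,j+1\}$, with graph distance $d(i,j)=|i-j|$. A measure $\mu$ on $L_n$ is a weight function $\mu:\{1,\dots,n\}\to(0,\infty)$, $\mu(A)=\sum_{v\in A}\mu(v)$; it is symmetric if $\mu(j)=\mu(n+1-j)$ for all $j$. Closed balls: $B(x,r)=\{y:|x-y|\le r\}$. $C_\mu=\sup\{\mu(B(x,2k+1))/\mu(B(x,k)):1\le x\le n,\ k\in\{0,1,2,\dots\}\}$, $C^0_\mu=\max_x\mu(B(x,1))/\mu(x)$. Define $$M_1(\mu)=\sup\Big\{\frac{\mu(B(1,2k+1))}{\mu(B(1,k))}: k\in\mathbb Z,\ 0\le k<\Big\lceil\frac{n-2}{3}\Big\rceil\Big\},$$ $$M_2(\mu)=\sup\Big\{\frac{\mu(B(j,2k+1))}{\mu(B(j,k))}: j,k\in\mathbb Z,\ 1<j<\Big\lceil\frac n2\Big\rceil,\ \frac{\lceil n/2\rceil-j-1}{2}<k<\min\Big\{\frac{j-2}{2},\Big\lceil\frac{n-2j}{3}\Big\rceil,\Big\lceil\frac n2\Big\rceil-j\Big\}\Big\},$$ with the convention that the supremum of an empty set is $0$. *)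

theory Defs
  imports Complex_Main
begin

text \<open>Path graph L_n on vertices {1..n}; a measure is a weight function
  mu :: nat => real, positive on {1..n}.\<close>

definition is_measure :: "nat \<Rightarrow> (nat \<Rightarrow> real) \<Rightarrow> bool" where
  "is_measure n \<mu> \<longleftrightarrow> (\<forall>v\<in>{1..n}. \<mu> v > 0)"

definition symmetric_measure :: "nat \<Rightarrow> (nat \<Rightarrow> real) \<Rightarrow> bool" where
  "symmetric_measure n \<mu> \<longleftrightarrow> is_measure n \<mu> \<and> (\<forall>j\<in>{1..n}. \<mu> j = \<mu> (n + 1 - j))"

definition ball_L :: "nat \<Rightarrow> nat \<Rightarrow> int \<Rightarrow> nat set" where
  "ball_L n x r = {y\<in>{1..n}. \<bar>int x - int y\<bar> \<le> r}"

definition meas :: "(nat \<Rightarrow> real) \<Rightarrow> nat set \<Rightarrow> real" where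
  "meas \<mu> A = (\<Sum>v\<in>A. \<mu> v)"

definition ratio_L :: "nat \<Rightarrow> (nat \<Rightarrow> real) \<Rightarrow> nat \<Rightarrow> int \<Rightarrow> real" where
  "ratio_L n \<mu> x k = meas \<mu> (ball_L n x (2*k+1)) / meas \<mu> (ball_L n x k)"

definition sup0 :: "real set \<Rightarrow> real" where
  "sup0 S = (if S = {} then 0 else Sup S)"

definition C_mu :: "nat \<Rightarrow> (nat \<Rightarrow> real) \<Rightarrow> real" where
  "C_mu n \<mu> = sup0 {ratio_L n \<mu> x k | x k. x \<in> {1..n} \<and> k \<ge> 0}"

definition C0_mu :: "nat \<Rightarrow> (nat \<Rightarrow> real) \<Rightarrow> real" where
  "C0_mu n \<mu> = Max {meas \<mu> (ball_L n x 1) / \<mu> x | x. x \<in> {1..n}}"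

definition M1 :: "nat \<Rightarrow> (nat \<Rightarrow> real) \<Rightarrow> real" where
  "M1 n \<mu> = sup0 {ratio_L n \<mu> 1 k | k. 0 \<le> k \<and> k < \<lceil>(real n - 2) / 3\<rceil>}"

definition M2 :: "nat \<Rightarrow> (nat \<Rightarrow> real) \<Rightarrow> real" where
  "M2 n \<mu> = sup0 {ratio_L n \<mu> (nat j) k | j k.
      1 < j \<and> j < \<lceil>real n / 2\<rceil> \<and>
      (real_of_int (\<lceil>real n / 2\<rceil> - j - 1)) / 2 < real_of_int k \<and>
      real_of_int k < (real_of_int j - 2) / 2 \<and>
      k < \<lceil>(real n - 2 * real_of_int j) / 3\<rceil> \<and>
      k < \<lceil>real n / 2\<rceil> - j}"

end

theory Submission
  imports Defs
begin

text \<open>Extend \<open>\<mu>\<close> by zero to a function \<open>f\<close> on the integers.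
  Since \<open>C\<^sup>0\<^sub>\<mu> < 3\<close>, the local bound \<open>f(y-1) + f(y) + f(y+1)
  \<le> C\<^sup>0\<^sub>\<mu> f(y)\<close> makes \<open>f\<close> discretely concave on
  \<open>[0, n+1]\<close>; together with symmetry, \<open>f\<close> is monotone and subadditive
  in the distance to the boundary. For a ball \<open>B(x,k)\<close> with \<open>x\<close> in
  the left half and \<open>x - k \<ge> 2\<close> this lets the local bounds summed over
  \<open>B(x,k)\<close> dominate \<open>\<mu>(B(x,2k+1))\<close>, so its ratio is at most
  \<open>C\<^sup>0\<^sub>\<mu>\<close>. A ball meeting the left end has ratio at most that of
  \<open>B(1, x+k-1)\<close>, and concavity makes the ratios of the balls \<open>B(1,m)\<close>
  nonincreasing once \<open>3m + 2 \<ge> n\<close>, so they are bounded by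
  \<open>M\<^sub>1(\<mu>)\<close>. Hence \<open>C\<^sub>\<mu> \<le> max {M\<^sub>1(\<mu>),
  C\<^sup>0\<^sub>\<mu>}\<close>; the reverse inequalities, including the one for
  \<open>M\<^sub>2(\<mu>)\<close>, hold because each of these quantities is a supremum of
  ratios entering \<open>C\<^sub>\<mu>\<close>.\<close>

lemma sum_int_interval_split:
  fixes f :: "int \<Rightarrow> 'a::comm_monoid_add"
  assumes "a \<le> m + 1" "m \<le> b"
  shows "sum f {a..b} = sum f {a..m} + sum f {m + 1..b}"
proof -
  have "{a..b} = {a..m} \<union> {m + 1..b}" using assms by auto
  then show ?thesis by (simp add: sum.union_disjoint)
qed

lemma sum_int_shift:
  "(\<Sum>y\<in>{a..b::int}. g (y + c)) = sum g {a + c..b + c}"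
  by (rule sum.reindex_bij_witness[where i="\<lambda>y. y - c" and j="\<lambda>y. y + c"]) auto

lemma sum_ceiling_half_le:
  fixes w :: "nat \<Rightarrow> real"
  assumes "\<And>t. 0 \<le> w t" "1 \<le> k"
  shows "(\<Sum>m<k. w ((m + 1) div 2)) \<le> w 0 + 2 * (\<Sum>t\<in>{1..<k}. w t)"
proof -
  have odd_length: "(\<Sum>m<2 * j + 1. w ((m + 1) div 2)) = w 0 + 2 * (\<Sum>t\<in>{1..j}. w t)" for j
  proof (induction j)
    case (Suc j)
    have "(\<Sum>m<2 * Suc j + 1. w ((m + 1) div 2))
        = (\<Sum>m<2 * j + 1. w ((m + 1) div 2)) + w ((2 * j + 2) div 2) + w ((2 * j + 3) div 2)"
      by (simp add: numeral_eq_Suc)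
    also have "(2 * j + 2) div 2 = Suc j" by simp
    also have "(2 * j + 3) div 2 = Suc j" by simp
    finally show ?case using Suc by simp
  qed simp
  let ?j = "k div 2"
  have "(\<Sum>m<k. w ((m + 1) div 2)) \<le> (\<Sum>m<2 * ?j + 1. w ((m + 1) div 2))"
    by (rule sum_mono2) (auto simp: assms(1))
  also have "\<dots> = w 0 + 2 * (\<Sum>t\<in>{1..?j}. w t)" by (rule odd_length)
  also have "(\<Sum>t\<in>{1..?j}. w t) \<le> (\<Sum>t\<in>{1..<k}. w t)"
    by (rule sum_mono2) (use assms in auto)
  finally show ?thesis by simp
qed

definition ball_mass :: "(int \<Rightarrow> real) \<Rightarrow> int \<Rightarrow> int \<Rightarrow> real" where
  "ball_mass f x r = sum f {x - r..x + r}"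

definition sphere_mass :: "(int \<Rightarrow> real) \<Rightarrow> int \<Rightarrow> int \<Rightarrow> real" where
  "sphere_mass f x t = f (x - t) + f (x + t)"

lemma ball_mass_0 [simp]: "ball_mass f x 0 = f x"
  by (simp add: ball_mass_def)

lemma ball_mass_1: "ball_mass f x 1 = f (x - 1) + f x + f (x + 1)"
proof -
  have "{x - 1..x + 1} = {x - 1, x, x + 1}" by auto
  then show ?thesis by (simp add: ball_mass_def)
qed

lemma ball_mass_add_spheres:
  "ball_mass f x (int (r + s)) = ball_mass f x (int r) + (\<Sum>t\<in>{r + 1..r + s}. sphere_mass f x (int t))"
proof (induction s)
  case 0 then show ?case by simp
next
  case (Suc s)
  have "{x - int (r + Suc s)..x + int (r + Suc s)} =
      insert (x - int (r + s) - 1) (insert (x + int (r + s) + 1) {x - int (r + s)..x + int (r + s)})"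
    by auto
  then have "ball_mass f x (int (r + Suc s)) = ball_mass f x (int (r + s)) + sphere_mass f x (int (r + Suc s))"
    by (simp add: ball_mass_def sphere_mass_def algebra_simps)
  then show ?case using Suc by simp
qed

lemma ball_mass_Suc: "ball_mass f x (int r + 1) = ball_mass f x (int r) + sphere_mass f x (int r + 1)"
  using ball_mass_add_spheres[of f x r 1] by (simp add: add.commute)

lemma neighbour_sum_ball_mass:
  assumes "0 \<le> k"
  shows "(\<Sum>y\<in>{x - k..x + k}. f (y - 1) + f y + f (y + 1))
    = 3 * ball_mass f x k + sphere_mass f x (k + 1) - sphere_mass f x k"
proof -
  have left: "sum f {x - k - 1..x + k + 1} = sum f {x - k - 1..x + k - 1} + f (x + k) + f (x + k + 1)"
    using assms sum_int_interval_split[of "x - k - 1" "x + k - 1" "x + k + 1" f]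
      sum_int_interval_split[of "x + k" "x + k" "x + k + 1" f] by simp
  have right: "sum f {x - k - 1..x + k + 1} = f (x - k - 1) + f (x - k) + sum f {x - k + 1..x + k + 1}"
    using assms sum_int_interval_split[of "x - k - 1" "x - k - 1" "x + k + 1" f]
      sum_int_interval_split[of "x - k" "x - k" "x + k + 1" f] by simp
  have "ball_mass f x (k + 1) = ball_mass f x k + sphere_mass f x (k + 1)"
    using ball_mass_Suc[of f x "nat k"] assms by simp
  then show ?thesis
    using left right
    by (simp add: sum.distrib sum_int_shift[where c="-1", simplified] sum_int_shift[where c=1]
        ball_mass_def sphere_mass_def algebra_simps)
qed

lemma ball_mass_reflect:
  assumes "\<And>y. f (N - y) = f y"
  shows "ball_mass f (N - x) r = ball_mass f x r"
proof -
  have "ball_mass f (N - x) r = (\<Sum>y\<in>{x - r..x + r}. f (N - y))"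
    unfolding ball_mass_def
    by (rule sum.reindex_bij_witness[where i="\<lambda>y. N - y" and j="\<lambda>y. N - y"]) auto
  then show ?thesis by (simp add: assms ball_mass_def)
qed

locale symmetric_concave_profile =
  fixes n :: nat and f :: "int \<Rightarrow> real"
  assumes pos: "1 \<le> y \<Longrightarrow> y \<le> int n \<Longrightarrow> 0 < f y"
    and zero_outside: "y < 1 \<or> int n < y \<Longrightarrow> f y = 0"
    and symmetric: "f (int n + 1 - y) = f y"
    and concave: "1 \<le> y \<Longrightarrow> y \<le> int n \<Longrightarrow> f (y - 1) + f (y + 1) \<le> 2 * f y"
begin

lemma nonneg: "0 \<le> f y"
  using pos[of y] zero_outside[of y] by (cases "1 \<le> y \<and> y \<le> int n") auto

lemma increment_antimono:
  assumes "0 \<le> p" "p \<le> q" "q \<le> int n"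
  shows "f (q + 1) - f q \<le> f (p + 1) - f p"
  using assms(2,3)
proof (induction q rule: int_ge_induct)
  case (step q)
  have "f (q + 1 + 1) - f (q + 1) \<le> f (q + 1) - f q"
    using concave[of "q + 1"] assms(1) step.hyps step.prems by (simp add: algebra_simps)
  with step show ?case by simp
qed simp

lemma gap_antimono:
  assumes "0 \<le> a" "a \<le> c" "c + int j \<le> int n + 1"
  shows "f (c + int j) - f c \<le> f (a + int j) - f a"
  using assms(3)
proof (induction j)
  case (Suc j)
  have "f (c + int j + 1) - f (c + int j) \<le> f (a + int j + 1) - f (a + int j)"
    using assms Suc.prems by (intro increment_antimono) auto
  with Suc show ?case by (simp add: algebra_simps)
qed simp

lemma four_point:
  assumes "0 \<le> a" "a \<le> b" "b \<le> c" "c \<le> d" "d \<le> int n + 1" "a + d = b + c"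
  shows "f a + f d \<le> f b + f c"
proof -
  define j where "j = nat (d - c)"
  have "d = c + int j" "b = a + int j" using assms by (simp_all add: j_def)
  moreover have "f (c + int j) - f c \<le> f (a + int j) - f a"
    using assms calculation by (intro gap_antimono) simp_all
  ultimately show ?thesis by simp
qed

definition depth :: "int \<Rightarrow> int" where
  "depth y = min y (int n + 1 - y)"

lemma f_depth: "f (depth y) = f y"
  using symmetric[of y] by (simp add: depth_def min_def)

lemma depth_le_half: "2 * depth y \<le> int n + 1"
  by (simp add: depth_def min_def)

lemma mono_left_half:
  assumes "0 \<le> p" "p \<le> q" "2 * q \<le> int n + 1"
  shows "f p \<le> f q"
  using four_point[of p q "int n + 1 - q" "int n + 1 - p"] assms by (simp add: symmetric)

lemma mono_depth:
  assumes "0 \<le> depth a" "depth y \<le> depth a"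
  shows "f y \<le> f a"
proof (cases "0 \<le> depth y")
  case True
  then have "f (depth y) \<le> f (depth a)"
    using assms depth_le_half by (intro mono_left_half)
  then show ?thesis by (simp add: f_depth)
next
  case False
  then have "f y = 0" using zero_outside[of "depth y"] by (simp add: f_depth)
  then show ?thesis using nonneg[of a] by simp
qed

lemma subadditive_depth:
  assumes "0 \<le> depth a" "0 \<le> depth b" "depth y \<le> depth a + depth b"
  shows "f y \<le> f a + f b"
proof (cases "depth y \<le> depth a \<or> depth y \<le> depth b")
  case True
  then show ?thesis
  proof
    assume "depth y \<le> depth a"
    then show ?thesis using assms(1) mono_depth nonneg[of b] by fastforce
  next
    assume "depth y \<le> depth b"
    then show ?thesis using assms(2) mono_depth nonneg[of a] by fastforce
  qed
next
  case False
  let ?p = "depth y" and ?a = "depth a" and ?b = "depth b"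
  have "f 0 + f ?p \<le> f (min (?p - ?b) ?b) + f (max (?p - ?b) ?b)"
    using False assms depth_le_half[of y] by (intro four_point) auto
  then have "f ?p \<le> f (?p - ?b) + f ?b"
    using zero_outside[of 0] by (cases "?p - ?b \<le> ?b") (simp_all add: min_def max_def)
  also have "f (?p - ?b) \<le> f ?a"
    using False assms depth_le_half[of a] by (intro mono_left_half) auto
  finally show ?thesis by (simp add: f_depth)
qed

lemma sphere_mass_le:
  assumes "2 * x \<le> int n + 1" "0 \<le> s'" "s' \<le> s" "s \<le> t" "s' \<le> x" "x + s \<le> int n + 1"
    and "t + s' \<le> x + s"
  shows "sphere_mass f x t \<le> f (x - s') + f (x + s)"
proof (cases "t \<le> x")
  case True
  have left: "f (x - t) \<le> f (x - s')"
    using assms True by (intro mono_depth) (auto simp: depth_def min_def)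
  show ?thesis
  proof (cases "x + t \<le> int n + 1")
    case True
    have "f (x - t) + f (x + t) \<le> f (x - s) + f (x + s)"
      using assms \<open>t \<le> x\<close> True by (intro four_point) auto
    moreover have "f (x - s) \<le> f (x - s')"
      using assms \<open>t \<le> x\<close> by (intro mono_depth) (auto simp: depth_def min_def)
    ultimately show ?thesis unfolding sphere_mass_def by simp
  next
    case False
    then show ?thesis
      using left zero_outside[of "x + t"] nonneg[of "x + s"] unfolding sphere_mass_def by simp
  qed
next
  case False
  have "f (x + t) \<le> f (x + s) + f (x - s')"
    using assms False by (intro subadditive_depth) (auto simp: depth_def min_def)
  then show ?thesis using zero_outside[of "x - t"] False unfolding sphere_mass_def by simp
qed

text \<open>The sphere of radius \<open>2k + 1 - m\<close> is dominated by the two points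
  \<open>x - \<lceil>m/2\<rceil>\<close> and \<open>x + k - \<lceil>m/2\<rceil>\<close> of \<open>B(x,k)\<close>; as \<open>m\<close> runs
  through \<open>0..k-1\<close> no point of \<open>B(x,k)\<close> is used more than twice.\<close>

lemma outer_spheres_le:
  assumes "1 \<le> k" "int k + 2 \<le> x" "2 * x \<le> int n + 1"
  shows "(\<Sum>t\<in>{k + 2..2 * k + 1}. sphere_mass f x (int t))
    \<le> 2 * ball_mass f x (int k) - sphere_mass f x (int k)"
proof -
  define c where "c m = (m + 1) div 2" for m :: nat
  have "(\<Sum>t\<in>{k + 2..2 * k + 1}. sphere_mass f x (int t))
      = (\<Sum>m<k. sphere_mass f x (int (2 * k + 1 - m)))"
    by (rule sum.reindex_bij_witness[where i="\<lambda>t. 2 * k + 1 - t" and j="\<lambda>m. 2 * k + 1 - m"]) auto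
  also have "\<dots> \<le> (\<Sum>m<k. f (x - int (c m)) + f (x + (int k - int (c m))))"
  proof (rule sum_mono)
    fix m assume "m \<in> {..<k}"
    moreover have "2 * c m \<le> m + 1" "c m \<le> m" by (auto simp: c_def)
    ultimately show "sphere_mass f x (int (2 * k + 1 - m)) \<le> f (x - int (c m)) + f (x + (int k - int (c m)))"
      using assms by (intro sphere_mass_le) auto
  qed
  also have "\<dots> \<le> f x + 2 * (\<Sum>t\<in>{1..<k}. f (x - int t))
      + (f (x + int k) + 2 * (\<Sum>t\<in>{1..<k}. f (x + int t)))"
  proof -
    have "(\<Sum>m<k. f (x - int (c m))) \<le> f x + 2 * (\<Sum>t\<in>{1..<k}. f (x - int t))"
      using sum_ceiling_half_le[of "\<lambda>t. f (x - int t)" k] assms(1) nonneg unfolding c_def by simp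
    moreover have "(\<Sum>m<k. f (x + (int k - int (c m))))
        \<le> f (x + int k) + 2 * (\<Sum>t\<in>{1..<k}. f (x + (int k - int t)))"
      using sum_ceiling_half_le[of "\<lambda>t. f (x + (int k - int t))" k] assms(1) nonneg unfolding c_def by simp
    moreover have "(\<Sum>t\<in>{1..<k}. f (x + (int k - int t))) = (\<Sum>t\<in>{1..<k}. f (x + int t))"
      by (rule sum.reindex_bij_witness[where i="\<lambda>t. k - t" and j="\<lambda>t. k - t"]) auto
    ultimately show ?thesis by (simp add: sum.distrib)
  qed
  also have "\<dots> \<le> 2 * ball_mass f x (int k) - sphere_mass f x (int k)"
  proof -
    have "{1..k} = insert k {1..<k}" using assms(1) by auto
    then have "ball_mass f x (int k) = f x + (\<Sum>t\<in>{1..<k}. f (x - int t)) + (\<Sum>t\<in>{1..<k}. f (x + int t))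
        + sphere_mass f x (int k)"
      using ball_mass_add_spheres[of f x 0 k] by (simp add: sum.distrib sphere_mass_def)
    then show ?thesis using nonneg[of x] nonneg[of "x - int k"] by (simp add: sphere_mass_def)
  qed
  finally show ?thesis .
qed

definition prefix_mass :: "int \<Rightarrow> real" where
  "prefix_mass m = sum f {1..m}"

lemma ball_mass_at_left_boundary: "x - r \<le> 1 \<Longrightarrow> ball_mass f x r = prefix_mass (x + r)"
  unfolding ball_mass_def prefix_mass_def by (rule sum.mono_neutral_right) (auto intro: zero_outside)

lemma prefix_mass_mono: "m \<le> m' \<Longrightarrow> prefix_mass m \<le> prefix_mass m'"
  unfolding prefix_mass_def by (rule sum_mono2) (auto simp: nonneg)

lemma prefix_mass_nonneg: "0 \<le> prefix_mass m"
  unfolding prefix_mass_def by (rule sum_nonneg) (rule nonneg)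

lemma prefix_mass_pos: "1 \<le> m \<Longrightarrow> 1 \<le> n \<Longrightarrow> 0 < prefix_mass m"
  using prefix_mass_mono[of 1 m] pos[of 1] by (simp add: prefix_mass_def)

lemma prefix_mass_split: "0 \<le> a \<Longrightarrow> a \<le> b \<Longrightarrow> prefix_mass b = prefix_mass a + sum f {a + 1..b}"
  unfolding prefix_mass_def by (rule sum_int_interval_split) auto

lemma prefix_mass_Suc: "0 \<le> a \<Longrightarrow> prefix_mass (a + 1) = prefix_mass a + f (a + 1)"
  using prefix_mass_split[of a "a + 1"] by simp

lemma prefix_outer_pair_le_noncritical:
  assumes "1 \<le> k" "2 * k + 1 \<le> int n" "int n \<le> 3 * k + 1"
  shows "(f (2 * k + 1) + f (2 * k + 2)) * prefix_mass k \<le> f (k + 1) * prefix_mass (2 * k)"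
proof -
  let ?b = "f (k + 1)" and ?c = "f (2 * k + 1)" and ?inner = "sum f {k + 1..2 * k}"
  have outer: "f (2 * k + 2) \<le> ?b"
    using assms by (intro mono_depth) (auto simp: depth_def min_def)
  have "prefix_mass k \<le> of_nat (card {1..k}) * ?b"
    unfolding prefix_mass_def using assms
    by (intro sum_bounded_above) (auto intro!: mono_depth simp: depth_def min_def)
  then have head: "prefix_mass k \<le> of_int k * ?b" using assms by simp
  have "of_nat (card {k + 1..2 * k}) * ?c \<le> ?inner"
    using assms by (intro sum_bounded_below) (auto intro!: mono_depth simp: depth_def min_def)
  then have inner: "of_int k * ?c \<le> ?inner" using assms by simp
  have "(?c + f (2 * k + 2)) * prefix_mass k \<le> ?c * (of_int k * ?b) + ?b * prefix_mass k"
    using mult_left_mono[OF head nonneg[of "2 * k + 1"]]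
      mult_right_mono[OF outer prefix_mass_nonneg[of k]]
    by (simp add: distrib_right)
  also have "\<dots> = (of_int k * ?c) * ?b + ?b * prefix_mass k" by simp
  also have "\<dots> \<le> ?inner * ?b + ?b * prefix_mass k"
    using mult_right_mono[OF inner nonneg[of "k + 1"]] by simp
  finally show ?thesis
    using prefix_mass_split[of k "2 * k"] assms by (simp add: algebra_simps)
qed

lemma prefix_outer_pair_le_critical:
  assumes "1 \<le> k" "int n = 3 * k + 2"
  shows "(f (2 * k + 1) + f (2 * k + 2)) * prefix_mass k \<le> f (k + 1) * prefix_mass (2 * k)"
proof -
  let ?b = "f (k + 1)" and ?c = "f (k + 2)" and ?inner = "sum f {k + 1..2 * k}"
  have outer: "f (2 * k + 1) = ?c" "f (2 * k + 2) = ?b"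
    using symmetric[of "k + 2"] symmetric[of "k + 1"] assms by (simp_all add: algebra_simps)
  have "of_nat (card {k + 2..2 * k}) * ?c \<le> sum f {k + 2..2 * k}"
    using assms by (intro sum_bounded_below) (auto intro!: mono_depth simp: depth_def min_def)
  moreover have "?inner = ?b + sum f {k + 2..2 * k}"
    using sum_int_interval_split[of "k + 1" "k + 1" "2 * k" f] assms by (simp add: add.commute)
  ultimately have inner: "?b + of_int (k - 1) * ?c \<le> ?inner"
    using assms by simp
  have "prefix_mass (k - 1) \<le> of_nat (card {1..k - 1}) * ?b"
    unfolding prefix_mass_def using assms
    by (intro sum_bounded_above) (auto intro!: mono_depth simp: depth_def min_def)
  then have head: "prefix_mass k \<le> of_int (k - 1) * ?b + f k"
    using prefix_mass_Suc[of "k - 1"] assms by simp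
  have "f k + ?c \<le> 2 * ?b"
    using concave[of "k + 1"] assms by (simp add: add.commute)
  with head have "prefix_mass k \<le> of_int (k - 1) * ?b + 2 * ?b - ?c" by simp
  then have "?c * prefix_mass k \<le> ?c * (of_int (k - 1) * ?b + 2 * ?b - ?c)"
    using nonneg[of "k + 2"] by (rule mult_left_mono)
  also have "\<dots> \<le> ?b * (?b + of_int (k - 1) * ?c)"
    using zero_le_square[of "?b - ?c"] by (simp add: algebra_simps power2_eq_square)
  also have "\<dots> \<le> ?b * ?inner"
    using inner nonneg[of "k + 1"] by (rule mult_left_mono)
  finally show ?thesis
    using prefix_mass_split[of k "2 * k"] assms outer by (simp add: algebra_simps)
qed

lemma prefix_ratio_step:
  assumes "1 \<le> k" "int n \<le> 3 * k + 2"
  shows "prefix_mass (2 * k + 2) * prefix_mass k \<le> prefix_mass (2 * k) * prefix_mass (k + 1)"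
proof -
  have "(f (2 * k + 1) + f (2 * k + 2)) * prefix_mass k \<le> f (k + 1) * prefix_mass (2 * k)"
  proof (cases "2 * k + 1 \<le> int n")
    case True
    then show ?thesis
      using assms prefix_outer_pair_le_noncritical prefix_outer_pair_le_critical by fastforce
  next
    case False
    then show ?thesis
      using zero_outside[of "2 * k + 1"] zero_outside[of "2 * k + 2"] nonneg[of "k + 1"]
        prefix_mass_nonneg[of "2 * k"] by simp
  qed
  moreover have "prefix_mass (2 * k + 2) = prefix_mass (2 * k) + f (2 * k + 1) + f (2 * k + 2)"
    using prefix_mass_Suc[of "2 * k"] prefix_mass_Suc[of "2 * k + 1"] assms by (simp add: algebra_simps)
  ultimately show ?thesis
    using prefix_mass_Suc[of k] assms by (simp add: algebra_simps)
qed

lemma prefix_ratio_le: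
  assumes "1 \<le> n" "1 \<le> K" "int n \<le> 3 * int K + 2"
    and "\<And>m. m < K \<Longrightarrow> prefix_mass (2 * int m + 2) / prefix_mass (int m + 1) \<le> M"
  shows "prefix_mass (2 * int m + 2) / prefix_mass (int m + 1) \<le> M"
proof (induction m rule: less_induct)
  case (less m)
  show ?case
  proof (cases "m < K")
    case False
    then have m: "1 \<le> int m" "int n \<le> 3 * int m + 2" using assms by auto
    have "prefix_mass (2 * int m + 2) / prefix_mass (int m + 1) \<le> prefix_mass (2 * int m) / prefix_mass (int m)"
      using prefix_ratio_step[OF m] prefix_mass_pos[of "int m"] prefix_mass_pos[of "int m + 1"] m assms(1)
      by (simp add: field_simps)
    also have "\<dots> \<le> M"
      using less.IH[of "m - 1"] m by (simp add: of_nat_diff algebra_simps)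
    finally show ?thesis .
  qed (rule assms(4))
qed

lemma ball_mass_pos: "1 \<le> x \<Longrightarrow> x \<le> int n \<Longrightarrow> 0 \<le> r \<Longrightarrow> 0 < ball_mass f x r"
  using member_le_sum[of x "{x - r..x + r}" f] nonneg pos[of x] by (force simp: ball_mass_def)

end

locale locally_doubling_profile = symmetric_concave_profile +
  fixes C :: real
  assumes local_doubling: "1 \<le> y \<Longrightarrow> y \<le> int n \<Longrightarrow> f (y - 1) + f y + f (y + 1) \<le> C * f y"
begin

lemma ball_doubling_interior:
  assumes "1 \<le> k" "int k + 2 \<le> x" "2 * x \<le> int n + 1"
  shows "ball_mass f x (2 * int k + 1) \<le> C * ball_mass f x (int k)"
proof -
  have "int (k + 1 + k) = 2 * int k + 1" "int (k + 1) = int k + 1"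
      "{k + 1 + 1..k + 1 + k} = {k + 2..2 * k + 1}"
    by auto
  then have "ball_mass f x (2 * int k + 1)
      = ball_mass f x (int k + 1) + (\<Sum>t\<in>{k + 2..2 * k + 1}. sphere_mass f x (int t))"
    using ball_mass_add_spheres[of f x "k + 1" k] by (simp only:)
  also have "\<dots> \<le> ball_mass f x (int k) + sphere_mass f x (int k + 1)
      + (2 * ball_mass f x (int k) - sphere_mass f x (int k))"
    using outer_spheres_le[OF assms] ball_mass_Suc[of f x k] by simp
  also have "\<dots> = (\<Sum>y\<in>{x - int k..x + int k}. f (y - 1) + f y + f (y + 1))"
    using neighbour_sum_ball_mass[of "int k" f x] by simp
  also have "\<dots> \<le> (\<Sum>y\<in>{x - int k..x + int k}. C * f y)"
    using assms by (intro sum_mono local_doubling) auto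
  also have "\<dots> = C * ball_mass f x (int k)"
    by (simp add: ball_mass_def sum_distrib_left)
  finally show ?thesis .
qed

lemma ball_ratio_le_left_half:
  assumes "1 \<le> K" "int n \<le> 3 * int K + 2" "C \<le> M"
    and prefix: "\<And>m. m < K \<Longrightarrow> prefix_mass (2 * int m + 2) / prefix_mass (int m + 1) \<le> M"
    and "1 \<le> x" "2 * x \<le> int n + 1" "0 \<le> k"
  shows "ball_mass f x (2 * k + 1) / ball_mass f x k \<le> M"
proof -
  have ball_pos: "0 < ball_mass f x k" using assms by (intro ball_mass_pos) auto
  have by_doubling: "ball_mass f x (2 * k + 1) / ball_mass f x k \<le> M"
    if "ball_mass f x (2 * k + 1) \<le> C * ball_mass f x k"
  proof -
    have "C * ball_mass f x k \<le> M * ball_mass f x k"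
      using assms(3) ball_pos by (intro mult_right_mono) auto
    with that show ?thesis unfolding pos_divide_le_eq[OF ball_pos] by linarith
  qed
  consider "k = 0" | "1 \<le> k" "x - k \<le> 1" | "1 \<le> k" "k + 2 \<le> x"
    using assms by linarith
  then show ?thesis
  proof cases
    case 1
    then have "ball_mass f x (2 * k + 1) \<le> C * ball_mass f x k"
      using local_doubling[of x] assms by (simp add: ball_mass_1)
    then show ?thesis by (rule by_doubling)
  next
    case 2
    define m where "m = nat (x + k - 1)"
    have m: "int m = x + k - 1" using assms by (simp add: m_def)
    have "ball_mass f x (2 * k + 1) / ball_mass f x k = prefix_mass (x + 2 * k + 1) / prefix_mass (int m + 1)"
      using 2 m by (simp add: ball_mass_at_left_boundary algebra_simps)
    also have "\<dots> \<le> prefix_mass (2 * int m + 2) / prefix_mass (int m + 1)"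
      using m assms by (intro divide_right_mono prefix_mass_mono prefix_mass_nonneg) auto
    also have "\<dots> \<le> M"
      using assms(1,2) prefix by (rule prefix_ratio_le[rotated]) (use assms in auto)
    finally show ?thesis .
  next
    case 3
    then have "ball_mass f x (2 * k + 1) \<le> C * ball_mass f x k"
      using ball_doubling_interior[of "nat k" x] assms by simp
    then show ?thesis by (rule by_doubling)
  qed
qed

lemma ball_ratio_le:
  assumes "1 \<le> K" "int n \<le> 3 * int K + 2" "C \<le> M"
    and "\<And>m. m < K \<Longrightarrow> prefix_mass (2 * int m + 2) / prefix_mass (int m + 1) \<le> M"
    and "1 \<le> x" "x \<le> int n" "0 \<le> k"
  shows "ball_mass f x (2 * k + 1) / ball_mass f x k \<le> M"
proof (cases "2 * x \<le> int n + 1")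
  case True
  then show ?thesis using assms by (intro ball_ratio_le_left_half) auto
next
  case False
  have "ball_mass f (int n + 1 - x) (2 * k + 1) / ball_mass f (int n + 1 - x) k \<le> M"
    using assms False by (intro ball_ratio_le_left_half) auto
  then show ?thesis using ball_mass_reflect[of f "int n + 1", OF symmetric] by simp
qed

end

definition profile :: "nat \<Rightarrow> (nat \<Rightarrow> real) \<Rightarrow> int \<Rightarrow> real" where
  "profile n \<mu> y = (if 1 \<le> y \<and> y \<le> int n then \<mu> (nat y) else 0)"

lemma meas_ball_L: "meas \<mu> (ball_L n x r) = ball_mass (profile n \<mu>) (int x) r"
proof -
  let ?I = "{int x - r..int x + r} \<inter> {1..int n}"
  have "ball_mass (profile n \<mu>) (int x) r = sum (profile n \<mu>) ?I"
    unfolding ball_mass_def by (rule sum.mono_neutral_right) (auto simp: profile_def)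
  also have "\<dots> = sum (\<mu> \<circ> nat) ?I"
    by (rule sum.cong) (auto simp: profile_def)
  also have "\<dots> = sum \<mu> (nat ` ?I)"
    by (rule sum.reindex[symmetric]) (auto simp: inj_on_def)
  also have "nat ` ?I = ball_L n x r"
  proof
    show "nat ` ?I \<subseteq> ball_L n x r" unfolding ball_L_def by (auto simp: le_nat_iff)
    show "ball_L n x r \<subseteq> nat ` ?I"
    proof
      fix y assume "y \<in> ball_L n x r"
      then have "int y \<in> ?I" "y = nat (int y)" unfolding ball_L_def by auto
      then show "y \<in> nat ` ?I" by blast
    qed
  qed
  finally show ?thesis by (simp add: meas_def)
qed

lemma ratio_L_eq_ball_mass_ratio:
  "ratio_L n \<mu> x k = ball_mass (profile n \<mu>) (int x) (2 * k + 1) / ball_mass (profile n \<mu>) (int x) k"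
  by (simp add: ratio_L_def meas_ball_L)

lemma profile_local_doubling:
  assumes "is_measure n \<mu>" "1 \<le> y" "y \<le> int n"
  shows "profile n \<mu> (y - 1) + profile n \<mu> y + profile n \<mu> (y + 1) \<le> C0_mu n \<mu> * profile n \<mu> y"
proof -
  have "nat y \<in> {1..n}" using assms by auto
  then have "meas \<mu> (ball_L n (nat y) 1) / \<mu> (nat y) \<le> C0_mu n \<mu>"
    unfolding C0_mu_def by (intro Max_ge) auto
  moreover have "meas \<mu> (ball_L n (nat y) 1) = profile n \<mu> (y - 1) + profile n \<mu> y + profile n \<mu> (y + 1)"
    using assms by (simp add: meas_ball_L ball_mass_1)
  moreover have "profile n \<mu> y = \<mu> (nat y)" "0 < \<mu> (nat y)"
    using assms \<open>nat y \<in> {1..n}\<close> by (auto simp: profile_def is_measure_def)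
  ultimately show ?thesis by (simp add: divide_le_eq)
qed

lemma locally_doubling_profile_of_measure:
  assumes "symmetric_measure n \<mu>" "C0_mu n \<mu> \<le> 3"
  shows "locally_doubling_profile n (profile n \<mu>) (C0_mu n \<mu>)"
proof -
  have measure: "is_measure n \<mu>" using assms(1) by (simp add: symmetric_measure_def)
  have pos: "0 < profile n \<mu> y" if "1 \<le> y" "y \<le> int n" for y
  proof -
    have "nat y \<in> {1..n}" using that by auto
    then show ?thesis using measure that by (simp add: profile_def is_measure_def)
  qed
  show ?thesis
  proof unfold_locales
    fix y :: int
    show "profile n \<mu> (int n + 1 - y) = profile n \<mu> y"
    proof (cases "1 \<le> y \<and> y \<le> int n")
      case True
      then have "nat y \<in> {1..n}" "nat (int n + 1 - y) = n + 1 - nat y" by auto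
      then show ?thesis using True assms(1) by (simp add: profile_def symmetric_measure_def)
    qed (auto simp: profile_def)
    assume y: "1 \<le> y" "y \<le> int n"
    show "0 < profile n \<mu> y" using pos y .
    show local_doubling: "profile n \<mu> (y - 1) + profile n \<mu> y + profile n \<mu> (y + 1)
        \<le> C0_mu n \<mu> * profile n \<mu> y"
      using measure y by (rule profile_local_doubling)
    have "C0_mu n \<mu> * profile n \<mu> y \<le> 3 * profile n \<mu> y"
      using assms(2) pos[OF y] by (intro mult_right_mono) auto
    with local_doubling show "profile n \<mu> (y - 1) + profile n \<mu> (y + 1) \<le> 2 * profile n \<mu> y"
      by linarith
  next
    fix y :: int
    assume "y < 1 \<or> int n < y"
    then show "profile n \<mu> y = 0" by (auto simp: profile_def)
  qed
qed

definition ratio_set :: "nat \<Rightarrow> (nat \<Rightarrow> real) \<Rightarrow> real set" where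
  "ratio_set n \<mu> = {ratio_L n \<mu> x k | x k. x \<in> {1..n} \<and> 0 \<le> k}"

lemma ratio_L_in_ratio_set: "x \<in> {1..n} \<Longrightarrow> 0 \<le> k \<Longrightarrow> ratio_L n \<mu> x k \<in> ratio_set n \<mu>"
  unfolding ratio_set_def by blast

lemma C_mu_eq_Sup_ratio_set:
  assumes "1 \<le> n"
  shows "C_mu n \<mu> = Sup (ratio_set n \<mu>)"
  using ratio_L_in_ratio_set[of 1 n 0 \<mu>] assms by (auto simp: C_mu_def sup0_def ratio_set_def)

lemma ratio_L_nonneg:
  assumes "is_measure n \<mu>"
  shows "0 \<le> ratio_L n \<mu> x k"
proof -
  have "0 \<le> meas \<mu> (ball_L n x r)" for r
    using assms unfolding meas_def ball_L_def is_measure_def by (intro sum_nonneg) force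
  then show ?thesis by (simp add: ratio_L_def)
qed

lemma sup0_le_C_mu:
  assumes "is_measure n \<mu>" "1 \<le> n" "bdd_above (ratio_set n \<mu>)" "S \<subseteq> ratio_set n \<mu>"
  shows "sup0 S \<le> C_mu n \<mu>"
proof -
  have ratio_1_0: "ratio_L n \<mu> 1 0 \<in> ratio_set n \<mu>" using assms(2) by (intro ratio_L_in_ratio_set) auto
  show ?thesis
  proof (cases "S = {}")
    case True
    have "0 \<le> ratio_L n \<mu> 1 0" using assms(1) by (rule ratio_L_nonneg)
    also have "\<dots> \<le> Sup (ratio_set n \<mu>)" using ratio_1_0 assms(3) by (rule cSup_upper)
    finally show ?thesis using True assms(2) by (simp add: sup0_def C_mu_eq_Sup_ratio_set)
  next
    case False
    then show ?thesis
      using assms by (simp add: sup0_def C_mu_eq_Sup_ratio_set cSup_subset_mono)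
  qed
qed

lemma M1_le_C_mu:
  assumes "is_measure n \<mu>" "1 \<le> n" "bdd_above (ratio_set n \<mu>)"
  shows "M1 n \<mu> \<le> C_mu n \<mu>"
  unfolding M1_def using assms by (intro sup0_le_C_mu) (auto simp: ratio_set_def)

lemma M2_le_C_mu:
  assumes "is_measure n \<mu>" "1 \<le> n" "bdd_above (ratio_set n \<mu>)"
  shows "M2 n \<mu> \<le> C_mu n \<mu>"
  unfolding M2_def
proof (intro sup0_le_C_mu assms subsetI)
  fix z assume "z \<in> {ratio_L n \<mu> (nat j) k | j k.
      1 < j \<and> j < \<lceil>real n / 2\<rceil> \<and>
      (real_of_int (\<lceil>real n / 2\<rceil> - j - 1)) / 2 < real_of_int k \<and>
      real_of_int k < (real_of_int j - 2) / 2 \<and>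
      k < \<lceil>(real n - 2 * real_of_int j) / 3\<rceil> \<and>
      k < \<lceil>real n / 2\<rceil> - j}"
  then obtain j k where jk: "z = ratio_L n \<mu> (nat j) k" "1 < j" "j < \<lceil>real n / 2\<rceil>"
      "real_of_int (\<lceil>real n / 2\<rceil> - j - 1) / 2 < real_of_int k"
    by blast
  have "\<lceil>real n / 2\<rceil> \<le> int n" by (simp add: ceiling_le_iff)
  then have "nat j \<in> {1..n}" using jk by auto
  moreover have "0 \<le> k"
  proof -
    have "0 \<le> real_of_int (\<lceil>real n / 2\<rceil> - j - 1) / 2" using jk(3) by simp
    then have "0 < real_of_int k" using jk(4) by linarith
    then show ?thesis by simp
  qed
  ultimately show "z \<in> ratio_set n \<mu>" unfolding ratio_set_def jk(1) by blast
qed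

lemma C0_mu_le_C_mu:
  assumes "1 \<le> n" "bdd_above (ratio_set n \<mu>)"
  shows "C0_mu n \<mu> \<le> C_mu n \<mu>"
proof -
  let ?S = "{meas \<mu> (ball_L n x 1) / \<mu> x | x. x \<in> {1..n}}"
  have "C0_mu n \<mu> \<in> ?S" unfolding C0_mu_def using assms(1) by (intro Max_in) auto
  then obtain x where x: "x \<in> {1..n}" "C0_mu n \<mu> = meas \<mu> (ball_L n x 1) / \<mu> x" by blast
  have "ball_L n x 0 = {x}" using x by (auto simp: ball_L_def)
  then have "C0_mu n \<mu> = ratio_L n \<mu> x 0" using x by (simp add: ratio_L_def meas_def)
  also have "\<dots> \<le> Sup (ratio_set n \<mu>)"
    using x assms(2) by (intro cSup_upper ratio_L_in_ratio_set) auto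
  finally show ?thesis using assms(1) by (simp add: C_mu_eq_Sup_ratio_set)
qed

lemma ratio_L_1_le_M1:
  assumes "0 \<le> k" "k < \<lceil>(real n - 2) / 3\<rceil>"
  shows "ratio_L n \<mu> 1 k \<le> M1 n \<mu>"
proof -
  let ?S = "{ratio_L n \<mu> 1 k | k. 0 \<le> k \<and> k < \<lceil>(real n - 2) / 3\<rceil>}"
  have "?S = (\<lambda>k. ratio_L n \<mu> 1 k) ` {0..<\<lceil>(real n - 2) / 3\<rceil>}" by auto
  then have "finite ?S" by simp
  moreover have "ratio_L n \<mu> 1 k \<in> ?S" using assms by blast
  ultimately show ?thesis unfolding M1_def sup0_def by (auto intro: cSup_upper bdd_above_finite)
qed

lemma ratio_L_le_max_M1_C0_mu:
  assumes "3 \<le> n" "symmetric_measure n \<mu>" "C0_mu n \<mu> \<le> 3" "x \<in> {1..n}" "0 \<le> k"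
  shows "ratio_L n \<mu> x k \<le> max (M1 n \<mu>) (C0_mu n \<mu>)"
proof -
  interpret locally_doubling_profile n "profile n \<mu>" "C0_mu n \<mu>"
    using assms(2,3) by (rule locally_doubling_profile_of_measure)
  define q where "q = \<lceil>(real n - 2) / 3\<rceil>"
  define K where "K = nat q"
  have "(real n - 2) / 3 \<le> of_int q" unfolding q_def by (rule le_of_int_ceiling)
  then have "real_of_int (int n) \<le> real_of_int (3 * q + 2)" by simp
  then have "int n \<le> 3 * q + 2" by (simp only: of_int_le_iff)
  moreover have "1 \<le> q" using assms(1) by (simp add: q_def le_ceiling_iff)
  ultimately have K: "1 \<le> K" "int n \<le> 3 * int K + 2" by (simp_all add: K_def)
  have "prefix_mass (2 * int m + 2) / prefix_mass (int m + 1) \<le> max (M1 n \<mu>) (C0_mu n \<mu>)"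
    if "m < K" for m
  proof -
    have "prefix_mass (2 * int m + 2) / prefix_mass (int m + 1) = ratio_L n \<mu> 1 (int m)"
      by (simp add: ratio_L_eq_ball_mass_ratio ball_mass_at_left_boundary add.commute)
    also have "\<dots> \<le> M1 n \<mu>" using that by (intro ratio_L_1_le_M1) (auto simp: K_def q_def)
    finally show ?thesis by simp
  qed
  then have "ball_mass (profile n \<mu>) (int x) (2 * k + 1) / ball_mass (profile n \<mu>) (int x) k
      \<le> max (M1 n \<mu>) (C0_mu n \<mu>)"
    using assms K by (intro ball_ratio_le) auto
  then show ?thesis by (simp add: ratio_L_eq_ball_mass_ratio)
qed

theorem theorem5p1:
  fixes n :: nat and \<mu> :: "nat \<Rightarrow> real"
  assumes "n \<ge> 3"
    and "symmetric_measure n \<mu>"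
    and "C0_mu n \<mu> < 3"
  shows "C_mu n \<mu> = Max {M1 n \<mu>, M2 n \<mu>, C0_mu n \<mu>}"
proof -
  have measure: "is_measure n \<mu>" and n: "1 \<le> n"
    using assms(1,2) by (simp_all add: symmetric_measure_def)
  have bound: "r \<le> max (M1 n \<mu>) (C0_mu n \<mu>)" if "r \<in> ratio_set n \<mu>" for r
    using that assms ratio_L_le_max_M1_C0_mu unfolding ratio_set_def by force
  then have bdd: "bdd_above (ratio_set n \<mu>)" by (rule bdd_aboveI)
  have "C_mu n \<mu> \<le> max (M1 n \<mu>) (C0_mu n \<mu>)"
    unfolding C_mu_eq_Sup_ratio_set[OF n]
    using ratio_L_in_ratio_set[of 1 n 0 \<mu>] n bound by (intro cSup_least) auto
  moreover have "M1 n \<mu> \<le> C_mu n \<mu>" "M2 n \<mu> \<le> C_mu n \<mu>" "C0_mu n \<mu> \<le> C_mu n \<mu>"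
    using measure n bdd by (simp_all add: M1_le_C_mu M2_le_C_mu C0_mu_le_C_mu)
  ultimately show ?thesis by (auto simp: max_def split: if_splits)
qed

end
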